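(* Let $p,q,k$ be nonnegative integers with $q<n$ and $k<n-q+1$. Then there exists a unique homogeneous polynomial $f_{k,p,q}=f_{k,p,q}(\underline{x}^2,\underline{\theta}^2)$ of total degree $k$ in $\underline{x}^2$ and $\underline{\theta}^2$, i.e. $f_{k,p,q}=\sum_{i=0}^k a_i\,\underline{x}^{2k-2i}\underline{\theta}^{2i}$ with $a_i\in\mathbb{R}$, such that $f_{k,p,q}\,\mathcal{H}_p^b\otimes\mathcal{H}_q^f\neq 0$, \[ \Delta\big(f_{k,p,q}\,\mathcal{H}_p^b\otimes\mathcal{H}_q^f\big)=0, \] and the coefficient of $\underline{x}^{2k}$ in $f_{k,p,q}$ equals $\dfrac{(n-q)!}{\Gamma(\frac m2+p+k)}$.
   Context: Let $m,n\ge 0$ be integers. Let $\mathcal{P}=\mathbb{R}[x_1,\dots,x_m]\otimes\Lambda_{2n}$ be the real algebra generated by commuting variables $x_1,\dots,x_m$ and anticommuting (Grassmann) variables $\theta_1,\dots,\theta_{2n}$, with $x_i\theta_j=\theta_jx_i$; $\partial_{\theta_j}$ is the Grassmann derivative. Super Laplace operator: $\Delta=\Delta_b+\Delta_f$ with $\Delta_b=-\sum_{j=1}^m\partial_{x_j}^2$ and $\Delta_f=4\sum_{j=1}^n\partial_{\theta_{2j-1}}\partial_{\theta_{2j}}$. Set $\underline{x}^2=-\sum_{j=1}^m x_j^2$, $\underline{\theta}^2=\sum_{j=1}^n\theta_{2j-1}\theta_{2j}$, with powers $\underline{x}^{2a}=(\underline{x}^2)^a$, $\underline{\theta}^{2a}=(\underline{\theta}^2)^a$.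 $\mathcal{H}_p^b$ is the space of polynomials in $x_1,\dots,x_m$ homogeneous of degree $p$ annihilated by $\Delta_b$; $\mathcal{H}_q^f$ is the space of elements of $\Lambda_{2n}$ homogeneous of degree $q$ annihilated by $\Delta_f$. For $f\in\mathcal{P}$, $f\,\mathcal{H}_p^b\otimes\mathcal{H}_q^f$ denotes the linear span of all products $f\,h\,g$ with $h\in\mathcal{H}_p^b$, $g\in\mathcal{H}_q^f$. *)

theory Defs
  imports "HOL-Analysis.Analysis"
begin

text \<open>Model of P = R[x_1..x_m] (x) Lambda_{2n}.  An element is a coefficient function
  F alpha S, the coefficient of the basis monomial x^alpha theta_S, where alpha is an exponent
  vector (alpha i = exponent of x_i, i = 1..m) and S a subset of {1..2n}; theta_S denotes the
  product of the theta_s, s in S, in increasing order of indices.\<close>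

type_synonym spoly = "(nat \<Rightarrow> nat) \<Rightarrow> nat set \<Rightarrow> real"

definition szero :: spoly where "szero = (\<lambda>_ _. 0)"

definition sone :: spoly where
  "sone = (\<lambda>\<alpha> S. if \<alpha> = (\<lambda>_. 0) \<and> S = {} then 1 else 0)"

definition sp_ok :: "nat \<Rightarrow> nat \<Rightarrow> spoly \<Rightarrow> bool" where
  "sp_ok m n F \<longleftrightarrow> finite {(\<alpha>, S). F \<alpha> S \<noteq> 0} \<and>
     (\<forall>\<alpha> S. F \<alpha> S \<noteq> 0 \<longrightarrow> (\<forall>i. i \<notin> {1..m} \<longrightarrow> \<alpha> i = 0) \<and> S \<subseteq> {1..2*n})"

text \<open>Sign of theta_S theta_T = sgn S T * theta_{S union T} for disjoint S, T.\<close>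
definition gsign :: "nat set \<Rightarrow> nat set \<Rightarrow> real" where
  "gsign S T = (-1) ^ card {(s, t). s \<in> S \<and> t \<in> T \<and> t < s}"

definition smul :: "spoly \<Rightarrow> spoly \<Rightarrow> spoly" where
  "smul F G = (\<lambda>\<gamma> U. \<Sum>\<alpha>\<in>{\<alpha>. \<forall>i. \<alpha> i \<le> \<gamma> i}. \<Sum>S\<in>Pow U.
       gsign S (U - S) * F \<alpha> S * G (\<lambda>i. \<gamma> i - \<alpha> i) (U - S))"

fun spow :: "spoly \<Rightarrow> nat \<Rightarrow> spoly" where
  "spow F 0 = sone"
| "spow F (Suc k) = smul F (spow F k)"

definition dx :: "nat \<Rightarrow> spoly \<Rightarrow> spoly" where
  "dx j F = (\<lambda>\<alpha> S. real (\<alpha> j + 1) * F (\<alpha>(j := \<alpha> j + 1)) S)"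

text \<open>(Left) Grassmann derivative in theta_j.\<close>
definition dth :: "nat \<Rightarrow> spoly \<Rightarrow> spoly" where
  "dth j F = (\<lambda>\<alpha> S. if j \<in> S then 0 else (-1) ^ card {s \<in> S. s < j} * F \<alpha> (insert j S))"

definition lap_b :: "nat \<Rightarrow> spoly \<Rightarrow> spoly" where
  "lap_b m F = (\<lambda>\<alpha> S. - (\<Sum>j=1..m. dx j (dx j F) \<alpha> S))"

definition lap_f :: "nat \<Rightarrow> spoly \<Rightarrow> spoly" where
  "lap_f n F = (\<lambda>\<alpha> S. 4 * (\<Sum>j=1..n. dth (2*j - 1) (dth (2*j) F) \<alpha> S))"

definition super_lap :: "nat \<Rightarrow> nat \<Rightarrow> spoly \<Rightarrow> spoly" where
  "super_lap m n F = (\<lambda>\<alpha> S. lap_b m F \<alpha> S + lap_f n F \<alpha> S)"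

definition xsq :: "nat \<Rightarrow> spoly" where
  "xsq m = (\<lambda>\<alpha> S. if S = {} \<and> (\<exists>j\<in>{1..m}. \<alpha> = (\<lambda>i. if i = j then 2 else 0)) then -1 else 0)"

definition thsq :: "nat \<Rightarrow> spoly" where
  "thsq n = (\<lambda>\<alpha> S. if \<alpha> = (\<lambda>_. 0) \<and> (\<exists>j\<in>{1..n}. S = {2*j - 1, 2*j}) then 1 else 0)"

definition fpoly :: "nat \<Rightarrow> nat \<Rightarrow> (nat \<Rightarrow> real) \<Rightarrow> nat \<Rightarrow> spoly" where
  "fpoly m n a k = (\<lambda>\<alpha> S. \<Sum>i\<le>k. a i * smul (spow (xsq m) (k - i)) (spow (thsq n) i) \<alpha> S)"

definition Hb :: "nat \<Rightarrow> nat \<Rightarrow> nat \<Rightarrow> spoly set" where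
  "Hb m n p = {F. sp_ok m n F \<and> (\<forall>\<alpha> S. F \<alpha> S \<noteq> 0 \<longrightarrow> S = {} \<and> (\<Sum>i=1..m. \<alpha> i) = p)
                 \<and> lap_b m F = szero}"

definition Hf :: "nat \<Rightarrow> nat \<Rightarrow> nat \<Rightarrow> spoly set" where
  "Hf m n q = {G. sp_ok m n G \<and> (\<forall>\<alpha> S. G \<alpha> S \<noteq> 0 \<longrightarrow> \<alpha> = (\<lambda>_. 0) \<and> card S = q)
                 \<and> lap_f n G = szero}"

definition fspan :: "nat \<Rightarrow> nat \<Rightarrow> spoly \<Rightarrow> nat \<Rightarrow> nat \<Rightarrow> spoly set" where
  "fspan m n f p q = {F. \<exists>(N::nat) h g. (\<forall>i<N. h i \<in> Hb m n p \<and> g i \<in> Hf m n q) \<and>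
       F = (\<lambda>\<alpha> S. \<Sum>i<N. smul (smul f (h i)) (g i) \<alpha> S)}"

end

theory Submission
  imports Defs
begin

text \<open>P is the tensor product of the polynomial algebra and the Grassmann algebra, with x^2 in
  the first factor and theta^2 in the second. Commuting the Laplacians past these squares gives,
  for h in H_p^b and g in H_q^f,
    Delta_b (x^(2r) h) = 2r (m + 2p + 2r - 2) x^(2r-2) h,
    Delta_f (theta^(2l) g) = -4l (n - q - l + 1) theta^(2l-2) g,
  so Delta (f h g) is the sum over j < k of
    (a_j c_(k-j) + a_(j+1) d_(j+1)) x^(2(k-j-1)) theta^(2j) h g.
  The products theta^(2j) g are nonzero for j <= n - q and have different degrees, hence Delta
  annihilates f H_p^b (x) H_q^f exactly when this two-term recursion holds. As d_(j+1) <> 0 for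
  j < n - q, the recursion and a_0 determine all coefficients, and a_0 <> 0 makes the span nonzero.\<close>

section \<open>The polynomial factor\<close>

definition dominated :: "(nat \<Rightarrow> nat) \<Rightarrow> (nat \<Rightarrow> nat) set" where
  "dominated \<gamma> = {\<alpha>. \<forall>i. \<alpha> i \<le> \<gamma> i}"

lemma finite_dominated:
  assumes "finite {i. \<gamma> i \<noteq> 0}"
  shows "finite (dominated \<gamma>)"
proof -
  let ?I = "{i. \<gamma> i \<noteq> 0}"
  have "(\<lambda>\<alpha>. restrict \<alpha> ?I) ` dominated \<gamma> \<subseteq> PiE ?I (\<lambda>i. {0..\<gamma> i})"
    by (auto simp: dominated_def PiE_def Pi_def)
  moreover have "finite (PiE ?I (\<lambda>i. {0..\<gamma> i}))"
    using assms by (intro finite_PiE) auto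
  moreover have "inj_on (\<lambda>\<alpha>. restrict \<alpha> ?I) (dominated \<gamma>)"
  proof (rule inj_onI, rule ext)
    fix a b i assume a: "a \<in> dominated \<gamma>" and b: "b \<in> dominated \<gamma>"
      and eq: "restrict a ?I = restrict b ?I"
    show "a i = b i"
    proof (cases "\<gamma> i = 0")
      case True
      then show ?thesis using a b by (simp add: dominated_def) (metis le_zero_eq)
    next
      case False
      then show ?thesis using fun_cong[OF eq, of i] by simp
    qed
  qed
  ultimately show ?thesis
    using finite_subset finite_imageD by blast
qed

lemma infinite_dominated:
  assumes "infinite {i. \<gamma> i \<noteq> 0}"
  shows "infinite (dominated \<gamma>)"
proof
  assume "finite (dominated \<gamma>)"
  moreover have "(\<lambda>i l. if l = i then 1 else 0) ` {i. \<gamma> i \<noteq> 0} \<subseteq> dominated \<gamma>"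
    by (auto simp: dominated_def)
  moreover have "inj_on (\<lambda>i l. if l = i then (1::nat) else 0) {i. \<gamma> i \<noteq> 0}"
    by (rule inj_onI) (metis (mono_tags) one_neq_zero)
  ultimately show False
    using assms by (metis finite_imageD finite_subset)
qed

definition bmul :: "((nat \<Rightarrow> nat) \<Rightarrow> real) \<Rightarrow> ((nat \<Rightarrow> nat) \<Rightarrow> real) \<Rightarrow> (nat \<Rightarrow> nat) \<Rightarrow> real" where
  "bmul A B = (\<lambda>\<gamma>. \<Sum>\<alpha>\<in>dominated \<gamma>. A \<alpha> * B (\<lambda>i. \<gamma> i - \<alpha> i))"

text \<open>A sum over an infinite set is 0 in HOL, so products vanish at exponent vectors of
  infinite support, and the unit laws hold only for factors that do the same.\<close>
definition bos_finsupp :: "((nat \<Rightarrow> nat) \<Rightarrow> real) \<Rightarrow> bool" where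
  "bos_finsupp B \<longleftrightarrow> (\<forall>\<gamma>. infinite {i. \<gamma> i \<noteq> 0} \<longrightarrow> B \<gamma> = 0)"

definition bos_one :: "(nat \<Rightarrow> nat) \<Rightarrow> real" where
  "bos_one \<alpha> = (if \<alpha> = (\<lambda>_. 0) then 1 else 0)"

lemma bos_finsupp_bmul: "bos_finsupp (bmul A B)"
  unfolding bos_finsupp_def bmul_def using infinite_dominated by auto

lemma bos_finsupp_bos_one: "bos_finsupp bos_one"
  unfolding bos_finsupp_def bos_one_def by auto

lemma bmul_bos_one_right:
  assumes "bos_finsupp B"
  shows "bmul B bos_one = B"
proof
  fix \<gamma>
  show "bmul B bos_one \<gamma> = B \<gamma>"
  proof (cases "finite {i. \<gamma> i \<noteq> 0}")
    case False
    then show ?thesis using assms infinite_dominated by (auto simp: bos_finsupp_def bmul_def)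
  next
    case True
    have "(\<lambda>i. \<gamma> i - \<alpha> i) = (\<lambda>_. 0) \<longleftrightarrow> \<alpha> = \<gamma>" if "\<alpha> \<in> dominated \<gamma>" for \<alpha>
      using that by (auto simp: dominated_def fun_eq_iff intro: le_antisym)
    then have "bmul B bos_one \<gamma> = (\<Sum>\<alpha>\<in>{\<gamma>}. B \<alpha> * bos_one (\<lambda>i. \<gamma> i - \<alpha> i))"
      unfolding bmul_def using True finite_dominated
      by (intro sum.mono_neutral_right) (auto simp: bos_one_def dominated_def)
    then show ?thesis by (simp add: bos_one_def)
  qed
qed

lemma bmul_bos_one_left:
  assumes "bos_finsupp B"
  shows "bmul bos_one B = B"
proof
  fix \<gamma>
  show "bmul bos_one B \<gamma> = B \<gamma>"
  proof (cases "finite {i. \<gamma> i \<noteq> 0}")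
    case False
    then show ?thesis using assms infinite_dominated by (auto simp: bos_finsupp_def bmul_def)
  next
    case True
    have "bmul bos_one B \<gamma> = (\<Sum>\<alpha>\<in>{(\<lambda>_. 0)}. bos_one \<alpha> * B (\<lambda>i. \<gamma> i - \<alpha> i))"
      unfolding bmul_def using True finite_dominated
      by (intro sum.mono_neutral_right) (auto simp: bos_one_def dominated_def)
    then show ?thesis by (simp add: bos_one_def)
  qed
qed

lemma bmul_assoc: "bmul (bmul A B) C = bmul A (bmul B C)"
proof
  fix \<gamma>
  show "bmul (bmul A B) C \<gamma> = bmul A (bmul B C) \<gamma>"
  proof (cases "finite (dominated \<gamma>)")
    case False
    then show ?thesis by (simp add: bmul_def)
  next
    case fin: True
    have fin_below: "finite (dominated \<beta>)" if "\<beta> \<in> dominated \<gamma>" for \<beta>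
      by (rule finite_subset[OF _ fin]) (use that in \<open>auto simp: dominated_def intro: le_trans\<close>)
    have fin_rest: "finite (dominated (\<lambda>i. \<gamma> i - \<alpha> i))" for \<alpha>
      by (rule finite_subset[OF _ fin]) (auto simp: dominated_def intro: order_trans[OF _ diff_le_self])
    have "bmul (bmul A B) C \<gamma> = (\<Sum>(\<beta>, \<alpha>)\<in>Sigma (dominated \<gamma>) dominated.
        A \<alpha> * B (\<lambda>i. \<beta> i - \<alpha> i) * C (\<lambda>i. \<gamma> i - \<beta> i))"
      by (simp add: bmul_def sum_distrib_right sum.Sigma fin fin_below)
    also have "\<dots> = (\<Sum>(\<alpha>, \<delta>)\<in>Sigma (dominated \<gamma>) (\<lambda>\<alpha>. dominated (\<lambda>i. \<gamma> i - \<alpha> i)).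
        A \<alpha> * B \<delta> * C (\<lambda>i. \<gamma> i - \<alpha> i - \<delta> i))"
    proof (rule sum.reindex_bij_witness[where i = "\<lambda>(\<alpha>, \<delta>). (\<lambda>i. \<alpha> i + \<delta> i, \<alpha>)"
          and j = "\<lambda>(\<beta>, \<alpha>). (\<alpha>, \<lambda>i. \<beta> i - \<alpha> i)"])
      fix x assume "x \<in> Sigma (dominated \<gamma>) dominated"
      then obtain \<beta> \<alpha> where x: "x = (\<beta>, \<alpha>)" "\<forall>i. \<beta> i \<le> \<gamma> i" "\<forall>i. \<alpha> i \<le> \<beta> i"
        by (auto simp: dominated_def)
      have "(\<lambda>i. \<gamma> i - \<alpha> i - (\<beta> i - \<alpha> i)) = (\<lambda>i. \<gamma> i - \<beta> i)"
        using x by (auto intro!: ext)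
      with x show "(case (case x of (\<beta>, \<alpha>) \<Rightarrow> (\<alpha>, \<lambda>i. \<beta> i - \<alpha> i)) of (\<alpha>, \<delta>) \<Rightarrow> (\<lambda>i. \<alpha> i + \<delta> i, \<alpha>)) = x"
        and "(case x of (\<beta>, \<alpha>) \<Rightarrow> (\<alpha>, \<lambda>i. \<beta> i - \<alpha> i)) \<in> Sigma (dominated \<gamma>) (\<lambda>\<alpha>. dominated (\<lambda>i. \<gamma> i - \<alpha> i))"
        and "(case (case x of (\<beta>, \<alpha>) \<Rightarrow> (\<alpha>, \<lambda>i. \<beta> i - \<alpha> i)) of (\<alpha>, \<delta>) \<Rightarrow> A \<alpha> * B \<delta> * C (\<lambda>i. \<gamma> i - \<alpha> i - \<delta> i)) =
          (case x of (\<beta>, \<alpha>) \<Rightarrow> A \<alpha> * B (\<lambda>i. \<beta> i - \<alpha> i) * C (\<lambda>i. \<gamma> i - \<beta> i))"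
        by (auto simp: dominated_def intro!: ext intro: le_trans diff_le_mono)
    next
      fix y assume "y \<in> Sigma (dominated \<gamma>) (\<lambda>\<alpha>. dominated (\<lambda>i. \<gamma> i - \<alpha> i))"
      then obtain \<alpha> \<delta> where y: "y = (\<alpha>, \<delta>)" "\<forall>i. \<alpha> i \<le> \<gamma> i" "\<forall>i. \<delta> i \<le> \<gamma> i - \<alpha> i"
        by (auto simp: dominated_def)
      then show "(case (case y of (\<alpha>, \<delta>) \<Rightarrow> (\<lambda>i. \<alpha> i + \<delta> i, \<alpha>)) of (\<beta>, \<alpha>) \<Rightarrow> (\<alpha>, \<lambda>i. \<beta> i - \<alpha> i)) = y"
        and "(case y of (\<alpha>, \<delta>) \<Rightarrow> (\<lambda>i. \<alpha> i + \<delta> i, \<alpha>)) \<in> Sigma (dominated \<gamma>) dominated"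
        by (auto simp: dominated_def) (metis le_add_diff_inverse add_le_cancel_left)
    qed
    also have "\<dots> = bmul A (bmul B C) \<gamma>"
      by (simp add: bmul_def sum_distrib_left sum.Sigma fin fin_rest mult.assoc)
    finally show ?thesis .
  qed
qed

lemma bmul_mult_right: "bmul A (\<lambda>\<gamma>. c * B \<gamma>) = (\<lambda>\<gamma>. c * bmul A B \<gamma>)"
  by (simp add: bmul_def sum_distrib_left ac_simps)

definition bos_xsq :: "nat \<Rightarrow> (nat \<Rightarrow> nat) \<Rightarrow> real" where
  "bos_xsq m \<alpha> = (if \<exists>j\<in>{1..m}. \<alpha> = (\<lambda>i. if i = j then 2 else 0) then -1 else 0)"

lemma bos_finsupp_upd:
  assumes "bos_finsupp B" "infinite {i. \<gamma> i \<noteq> 0}"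
  shows "B (\<gamma>(j := v)) = 0"
proof -
  have "{i. \<gamma> i \<noteq> 0} - {j} \<subseteq> {i. (\<gamma>(j := v)) i \<noteq> 0}" by auto
  then have "infinite {i. (\<gamma>(j := v)) i \<noteq> 0}"
    using assms(2) finite_subset by (metis finite_Diff2 finite.emptyI finite.insertI)
  then show ?thesis using assms(1) by (simp add: bos_finsupp_def)
qed

lemma bmul_bos_xsq:
  assumes "bos_finsupp Y"
  shows "bmul (bos_xsq m) Y \<gamma> = - (\<Sum>i=1..m. if 2 \<le> \<gamma> i then Y (\<gamma>(i := \<gamma> i - 2)) else 0)"
proof (cases "finite {i. \<gamma> i \<noteq> 0}")
  case False
  have "Y (\<gamma>(i := \<gamma> i - 2)) = 0" for i
    using bos_finsupp_upd[OF assms False] .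
  then have "(\<Sum>i=1..m. if 2 \<le> \<gamma> i then Y (\<gamma>(i := \<gamma> i - 2)) else 0) = 0"
    by (intro sum.neutral) simp
  then show ?thesis
    using infinite_dominated[OF False] by (simp add: bmul_def)
next
  case True
  define e where "e (j::nat) = (\<lambda>i. if i = j then 2 else 0 :: nat)" for j
  let ?I = "{i\<in>{1..m}. 2 \<le> \<gamma> i}"
  have inj_e: "inj e"
    by (rule injI) (metis e_def numeral_neq_zero)
  have "bmul (bos_xsq m) Y \<gamma> = (\<Sum>\<alpha>\<in>e ` ?I. bos_xsq m \<alpha> * Y (\<lambda>i. \<gamma> i - \<alpha> i))"
    unfolding bmul_def
  proof (rule sum.mono_neutral_right)
    show "finite (dominated \<gamma>)" using True finite_dominated by blast
    show "e ` ?I \<subseteq> dominated \<gamma>" by (auto simp: e_def dominated_def)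
    show "\<forall>\<alpha>\<in>dominated \<gamma> - e ` ?I. bos_xsq m \<alpha> * Y (\<lambda>i. \<gamma> i - \<alpha> i) = 0"
    proof
      fix \<alpha> assume \<alpha>: "\<alpha> \<in> dominated \<gamma> - e ` ?I"
      have "bos_xsq m \<alpha> = 0"
      proof (rule ccontr)
        assume "bos_xsq m \<alpha> \<noteq> 0"
        then obtain j where j: "j \<in> {1..m}" "\<alpha> = e j"
          by (auto simp: bos_xsq_def e_def split: if_splits)
        then have "2 \<le> \<gamma> j" using \<alpha> by (auto simp: dominated_def e_def elim!: allE[of _ j])
        then show False using \<alpha> j by auto
      qed
      then show "bos_xsq m \<alpha> * Y (\<lambda>i. \<gamma> i - \<alpha> i) = 0" by simp
    qed
  qed
  also have "\<dots> = (\<Sum>i\<in>?I. bos_xsq m (e i) * Y (\<lambda>l. \<gamma> l - e i l))"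
    using inj_on_subset[OF inj_e subset_UNIV] by (simp add: sum.reindex)
  also have "\<dots> = (\<Sum>i\<in>?I. - Y (\<gamma>(i := \<gamma> i - 2)))"
  proof (rule sum.cong)
    fix i assume "i \<in> ?I"
    then have "(\<lambda>l. \<gamma> l - e i l) = \<gamma>(i := \<gamma> i - 2)" "bos_xsq m (e i) = -1"
      by (auto simp: e_def bos_xsq_def)
    then show "bos_xsq m (e i) * Y (\<lambda>l. \<gamma> l - e i l) = - Y (\<gamma>(i := \<gamma> i - 2))" by simp
  qed simp
  also have "\<dots> = - (\<Sum>i=1..m. if 2 \<le> \<gamma> i then Y (\<gamma>(i := \<gamma> i - 2)) else 0)"
    by (simp only: sum_negf sum.inter_filter[OF finite_atLeastAtMost])
  finally show ?thesis .
qed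

definition bos_lap :: "nat \<Rightarrow> ((nat \<Rightarrow> nat) \<Rightarrow> real) \<Rightarrow> (nat \<Rightarrow> nat) \<Rightarrow> real" where
  "bos_lap m B = (\<lambda>\<alpha>. - (\<Sum>j=1..m. (real (\<alpha> j) + 1) * (real (\<alpha> j) + 2) * B (\<alpha>(j := \<alpha> j + 2))))"

lemma bos_finsupp_bos_lap: "bos_finsupp B \<Longrightarrow> bos_finsupp (bos_lap m B)"
  by (simp add: bos_finsupp_def bos_lap_def bos_finsupp_upd)

lemma bos_lap_bmul_bos_xsq:
  assumes "bos_finsupp Y"
  shows "bos_lap m (bmul (bos_xsq m) Y) \<gamma>
    = (4 * (\<Sum>j=1..m. real (\<gamma> j)) + 2 * real m) * Y \<gamma> + bmul (bos_xsq m) (bos_lap m Y) \<gamma>"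
proof -
  define c where "c \<alpha> j = (real (\<alpha> j) + 1) * (real (\<alpha> j) + 2)" for \<alpha> :: "nat \<Rightarrow> nat" and j
  define L where "L i j = c \<gamma> j * (if 2 \<le> (\<gamma>(j := \<gamma> j + 2)) i
      then Y ((\<gamma>(j := \<gamma> j + 2))(i := (\<gamma>(j := \<gamma> j + 2)) i - 2)) else 0)" for i j
  define R where "R i j = (if 2 \<le> \<gamma> i
      then c (\<gamma>(i := \<gamma> i - 2)) j * Y ((\<gamma>(i := \<gamma> i - 2))(j := (\<gamma>(i := \<gamma> i - 2)) j + 2)) else 0)" for i j
  have LR: "L i j = R i j + (if i = j then (4 * real (\<gamma> j) + 2) * Y \<gamma> else 0)" for i j
  proof (cases "i = j")
    case True
    then consider "2 \<le> \<gamma> j" | "\<gamma> j = 0" | "\<gamma> j = 1" by linarith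
    then show ?thesis
    proof cases
      case 1
      then have "(\<gamma>(j := \<gamma> j - 2))(j := \<gamma> j - 2 + 2) = \<gamma>" by (simp add: fun_eq_iff)
      with 1 True show ?thesis by (simp add: L_def R_def c_def of_nat_diff algebra_simps)
    qed (use True in \<open>simp_all add: L_def R_def c_def fun_upd_idem\<close>)
  next
    case False
    then show ?thesis by (simp add: L_def R_def c_def fun_upd_twist)
  qed
  have "bos_lap m (bmul (bos_xsq m) Y) \<gamma> = (\<Sum>j=1..m. \<Sum>i=1..m. L i j)"
    unfolding bos_lap_def bmul_bos_xsq[OF assms] L_def c_def
    by (simp only: sum_negf minus_minus mult_minus_right sum_distrib_left)
  also have "\<dots> = (\<Sum>j=1..m. \<Sum>i=1..m. R i j) + (\<Sum>j=1..m. (4 * real (\<gamma> j) + 2) * Y \<gamma>)"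
    by (simp add: LR sum.distrib)
  also have "(\<Sum>j=1..m. \<Sum>i=1..m. R i j) = bmul (bos_xsq m) (bos_lap m Y) \<gamma>"
    unfolding bmul_bos_xsq[OF bos_finsupp_bos_lap[OF assms]] sum_negf[symmetric] sum.swap[of "\<lambda>j i. R i j"]
    by (rule sum.cong[OF refl]) (simp add: R_def bos_lap_def c_def sum_negf)
  also have "(\<Sum>j=1..m. (4 * real (\<gamma> j) + 2) * Y \<gamma>) = (4 * (\<Sum>j=1..m. real (\<gamma> j)) + 2 * real m) * Y \<gamma>"
    by (simp add: sum_distrib_right sum.distrib sum_distrib_left algebra_simps)
  finally show ?thesis by simp
qed

section \<open>The Grassmann factor\<close>

definition fmul :: "(nat set \<Rightarrow> real) \<Rightarrow> (nat set \<Rightarrow> real) \<Rightarrow> nat set \<Rightarrow> real" where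
  "fmul W Z = (\<lambda>U. \<Sum>S\<in>Pow U. gsign S (U - S) * W S * Z (U - S))"

definition ferm_finsupp :: "(nat set \<Rightarrow> real) \<Rightarrow> bool" where
  "ferm_finsupp W \<longleftrightarrow> (\<forall>U. infinite U \<longrightarrow> W U = 0)"

definition ferm_one :: "nat set \<Rightarrow> real" where
  "ferm_one S = (if S = {} then 1 else 0)"

lemma ferm_finsupp_fmul: "ferm_finsupp (fmul W Z)"
  unfolding ferm_finsupp_def fmul_def by simp

lemma ferm_finsupp_ferm_one: "ferm_finsupp ferm_one"
  unfolding ferm_finsupp_def ferm_one_def by auto

lemma fmul_mult_right: "fmul W (\<lambda>S. c * Z S) = (\<lambda>S. c * fmul W Z S)"
  by (simp add: fmul_def sum_distrib_left ac_simps)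

lemma gsign_empty_left [simp]: "gsign {} T = 1"
  by (simp add: gsign_def)

lemma gsign_empty_right [simp]: "gsign S {} = 1"
  by (simp add: gsign_def)

lemma fmul_ferm_one_left:
  assumes "ferm_finsupp W"
  shows "fmul ferm_one W = W"
proof
  fix U
  show "fmul ferm_one W U = W U"
  proof (cases "finite U")
    case False
    then show ?thesis using assms by (simp add: fmul_def ferm_finsupp_def)
  next
    case True
    have "fmul ferm_one W U = (\<Sum>S\<in>{{}}. gsign S (U - S) * ferm_one S * W (U - S))"
      unfolding fmul_def by (rule sum.mono_neutral_right) (use True in \<open>auto simp: ferm_one_def\<close>)
    then show ?thesis by (simp add: ferm_one_def)
  qed
qed

lemma fmul_ferm_one_right:
  assumes "ferm_finsupp W"
  shows "fmul W ferm_one = W"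
proof
  fix U
  show "fmul W ferm_one U = W U"
  proof (cases "finite U")
    case False
    then show ?thesis using assms by (simp add: fmul_def ferm_finsupp_def)
  next
    case True
    have "fmul W ferm_one U = (\<Sum>S\<in>{U}. gsign S (U - S) * W S * ferm_one (U - S))"
      unfolding fmul_def by (rule sum.mono_neutral_right) (use True in \<open>auto simp: ferm_one_def\<close>)
    then show ?thesis by (simp add: ferm_one_def)
  qed
qed

lemma gsign_Un_left:
  assumes "A \<inter> B = {}" "finite A" "finite B" "finite C"
  shows "gsign (A \<union> B) C = gsign A C * gsign B C"
proof -
  let ?P = "\<lambda>X. {(s, t). s \<in> X \<and> t \<in> C \<and> t < s}"
  have fin: "finite (?P X)" if "finite X" for X
    by (rule finite_subset[of _ "X \<times> C"]) (use that assms in auto)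
  have "?P (A \<union> B) = ?P A \<union> ?P B" "?P A \<inter> ?P B = {}"
    using assms by auto
  then have "card (?P (A \<union> B)) = card (?P A) + card (?P B)"
    using fin assms by (simp add: card_Un_disjoint)
  then show ?thesis by (simp add: gsign_def power_add)
qed

lemma gsign_Un_right:
  assumes "B \<inter> C = {}" "finite A" "finite B" "finite C"
  shows "gsign A (B \<union> C) = gsign A B * gsign A C"
proof -
  let ?P = "\<lambda>X. {(s, t). s \<in> A \<and> t \<in> X \<and> t < s}"
  have fin: "finite (?P X)" if "finite X" for X
    by (rule finite_subset[of _ "A \<times> X"]) (use that assms in auto)
  have "?P (B \<union> C) = ?P B \<union> ?P C" "?P B \<inter> ?P C = {}"
    using assms by auto
  then have "card (?P (B \<union> C)) = card (?P B) + card (?P C)"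
    using fin assms by (simp add: card_Un_disjoint)
  then show ?thesis by (simp add: gsign_def power_add)
qed

lemma gsign_nested:
  assumes "A \<subseteq> S" "S \<subseteq> U" "finite U"
  shows "gsign S (U - S) * gsign A (S - A) = gsign A (U - A) * gsign (S - A) (U - S)"
proof -
  have "finite S" using rev_finite_subset[OF assms(3,2)] .
  then have fin: "finite A" "finite (S - A)" "finite (U - S)"
    using rev_finite_subset[OF _ assms(1)] assms(3) by auto
  have "S = A \<union> (S - A)" "U - A = (S - A) \<union> (U - S)"
    using assms by auto
  then have "gsign S (U - S) = gsign A (U - S) * gsign (S - A) (U - S)"
    and "gsign A (U - A) = gsign A (S - A) * gsign A (U - S)"
    using gsign_Un_left[of A "S - A" "U - S"] gsign_Un_right[of "S - A" "U - S" A] fin by auto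
  then show ?thesis by (simp add: algebra_simps)
qed

lemma fmul_assoc: "fmul (fmul W Z) R = fmul W (fmul Z R)"
proof
  fix U
  show "fmul (fmul W Z) R U = fmul W (fmul Z R) U"
  proof (cases "finite U")
    case False
    then show ?thesis by (simp add: fmul_def)
  next
    case fin: True
    have "fmul (fmul W Z) R U = (\<Sum>S\<in>Pow U. \<Sum>A\<in>Pow S.
        gsign S (U - S) * gsign A (S - A) * W A * Z (S - A) * R (U - S))"
      by (simp add: fmul_def sum_distrib_left sum_distrib_right mult.assoc)
    also have "\<dots> = (\<Sum>(S, A)\<in>Sigma (Pow U) Pow.
        gsign S (U - S) * gsign A (S - A) * W A * Z (S - A) * R (U - S))"
      by (rule sum.Sigma) (use fin finite_subset in auto)
    also have "\<dots> = (\<Sum>(A, B)\<in>Sigma (Pow U) (\<lambda>A. Pow (U - A)).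
        gsign A (U - A) * gsign B (U - A - B) * W A * Z B * R (U - A - B))"
    proof (rule sum.reindex_bij_witness[where i = "\<lambda>(A, B). (A \<union> B, A)" and j = "\<lambda>(S, A). (A, S - A)"])
      fix x assume "x \<in> Sigma (Pow U) Pow"
      then obtain S A where x: "x = (S, A)" "S \<subseteq> U" "A \<subseteq> S" by auto
      have "U - A - (S - A) = U - S" using x by auto
      with x gsign_nested[OF x(3,2) fin]
      show "(case (case x of (S, A) \<Rightarrow> (A, S - A)) of (A, B) \<Rightarrow>
            gsign A (U - A) * gsign B (U - A - B) * W A * Z B * R (U - A - B)) =
          (case x of (S, A) \<Rightarrow> gsign S (U - S) * gsign A (S - A) * W A * Z (S - A) * R (U - S))"
        by simp
    qed auto
    also have "\<dots> = (\<Sum>A\<in>Pow U. \<Sum>B\<in>Pow (U - A).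
        gsign A (U - A) * gsign B (U - A - B) * W A * Z B * R (U - A - B))"
      by (rule sum.Sigma[symmetric]) (use fin in auto)
    also have "\<dots> = fmul W (fmul Z R) U"
      by (simp add: fmul_def sum_distrib_left mult.assoc mult.left_commute)
    finally show ?thesis .
  qed
qed

definition tpair :: "nat \<Rightarrow> nat set" where
  "tpair j = {2*j - 1, 2*j}"

definition ferm_thsq :: "nat \<Rightarrow> nat set \<Rightarrow> real" where
  "ferm_thsq n S = (if \<exists>j\<in>{1..n}. S = tpair j then 1 else 0)"

definition ferm_lap :: "nat \<Rightarrow> (nat set \<Rightarrow> real) \<Rightarrow> nat set \<Rightarrow> real" where
  "ferm_lap n W = (\<lambda>S. -4 * (\<Sum>j\<in>{j\<in>{1..n}. tpair j \<inter> S = {}}. W (S \<union> tpair j)))"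

lemma tpair_disjoint: "1 \<le> j \<Longrightarrow> 1 \<le> l \<Longrightarrow> j \<noteq> l \<Longrightarrow> tpair j \<inter> tpair l = {}"
  unfolding tpair_def by auto

lemma tpair_nonempty: "tpair j \<noteq> {}"
  by (simp add: tpair_def)

lemma finite_tpair [simp]: "finite (tpair j)"
  by (simp add: tpair_def)

lemma card_tpair: "1 \<le> j \<Longrightarrow> card (tpair j) = 2"
  by (simp add: tpair_def)

lemma inj_on_tpair: "inj_on tpair {1..n}"
  by (rule inj_onI) (use tpair_disjoint tpair_nonempty in fastforce)

lemma mem_tpair_half: "1 \<le> x \<Longrightarrow> x \<in> tpair ((x + 1) div 2)"
  by (simp add: tpair_def) presburger

lemma gsign_tpair:
  assumes "1 \<le> j" "tpair j \<inter> V = {}"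
  shows "gsign (tpair j) V = 1"
proof -
  have "2*j - 1 \<notin> V" using assms by (auto simp: tpair_def)
  then have "t \<in> V \<Longrightarrow> t < 2*j \<longleftrightarrow> t < 2*j - 1" for t
    by (cases "t = 2*j - 1") auto
  then have "{(s, t). s \<in> tpair j \<and> t \<in> V \<and> t < s} = tpair j \<times> {t\<in>V. t < 2*j - 1}"
    using assms by (auto simp: tpair_def)
  then show ?thesis
    using assms by (simp add: gsign_def card_cartesian_product card_tpair power_mult)
qed

lemma ferm_finsupp_ferm_lap: "ferm_finsupp W \<Longrightarrow> ferm_finsupp (ferm_lap n W)"
  unfolding ferm_finsupp_def ferm_lap_def by simp

lemma fmul_ferm_thsq:
  assumes "ferm_finsupp W"
  shows "fmul (ferm_thsq n) W U = (\<Sum>j\<in>{j\<in>{1..n}. tpair j \<subseteq> U}. W (U - tpair j))"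
proof (cases "finite U")
  case False
  then have "W (U - tpair j) = 0" for j using assms by (simp add: ferm_finsupp_def)
  then show ?thesis using False by (simp add: fmul_def)
next
  case True
  let ?J = "{j\<in>{1..n}. tpair j \<subseteq> U}"
  have "fmul (ferm_thsq n) W U = (\<Sum>S\<in>tpair ` ?J. gsign S (U - S) * ferm_thsq n S * W (U - S))"
    unfolding fmul_def by (rule sum.mono_neutral_right) (use True in \<open>auto simp: ferm_thsq_def\<close>)
  also have "\<dots> = (\<Sum>j\<in>?J. gsign (tpair j) (U - tpair j) * ferm_thsq n (tpair j) * W (U - tpair j))"
    by (rule sum.reindex_cong[OF inj_on_subset[OF inj_on_tpair]]) auto
  also have "\<dots> = (\<Sum>j\<in>?J. W (U - tpair j))"
    by (rule sum.cong) (auto simp: gsign_tpair ferm_thsq_def)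
  finally show ?thesis .
qed

text \<open>Each of the n pairs meets S in 0, 1 or 2 elements; counting the first kind minus the
  last gives n - |S|.\<close>
lemma card_free_minus_card_full_tpairs:
  assumes "S \<subseteq> {1..2*n}"
  shows "real (card {j\<in>{1..n}. tpair j \<inter> S = {}}) - real (card {j\<in>{1..n}. tpair j \<subseteq> S})
    = real n - real (card S)"
proof -
  have "S = (\<Union>j\<in>{1..n}. S \<inter> tpair j)"
  proof (intro equalityI subsetI)
    fix x assume x: "x \<in> S"
    then have "1 \<le> x" "x \<le> 2*n" using assms by auto
    then have "(x + 1) div 2 \<in> {1..n}" unfolding atLeastAtMost_iff by presburger
    then show "x \<in> (\<Union>j\<in>{1..n}. S \<inter> tpair j)"
      using x mem_tpair_half[OF \<open>1 \<le> x\<close>] by (intro UN_I) auto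
  qed auto
  also have "card \<dots> = (\<Sum>j\<in>{1..n}. card (S \<inter> tpair j))"
    by (rule card_UN_disjoint) (auto simp: tpair_def)
  finally have card_S: "card S = (\<Sum>j\<in>{1..n}. card (S \<inter> tpair j))" .
  have "real n - real (card S) = (\<Sum>j\<in>{1..n}. 1 - real (card (S \<inter> tpair j)))"
    by (simp add: card_S sum_subtractf)
  also have "\<dots> = (\<Sum>j\<in>{1..n}.
      (if tpair j \<inter> S = {} then 1 else 0) - (if tpair j \<subseteq> S then 1 else (0::real)))"
  proof (rule sum.cong)
    fix j :: nat assume "j \<in> {1..n}"
    then show "1 - real (card (S \<inter> tpair j))
      = (if tpair j \<inter> S = {} then 1 else 0) - (if tpair j \<subseteq> S then 1 else 0)"
      by (cases "2*j - 1 \<in> S"; cases "2*j \<in> S") (auto simp: tpair_def Int_insert_right)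
  qed simp
  also have "\<dots> = real (card {j\<in>{1..n}. tpair j \<inter> S = {}}) - real (card {j\<in>{1..n}. tpair j \<subseteq> S})"
    by (simp add: sum_subtractf sum.If_cases Int_def)
  finally show ?thesis by simp
qed

lemma ferm_lap_fmul_ferm_thsq:
  assumes "ferm_finsupp W"
  shows "ferm_lap n (fmul (ferm_thsq n) W) S = fmul (ferm_thsq n) (ferm_lap n W) S
     - 4 * (real (card {j\<in>{1..n}. tpair j \<inter> S = {}}) - real (card {j\<in>{1..n}. tpair j \<subseteq> S})) * W S"
proof -
  let ?free = "{j\<in>{1..n}. tpair j \<inter> S = {}}" and ?full = "{j\<in>{1..n}. tpair j \<subseteq> S}"
  define G where "G j l = W ((S - tpair l) \<union> tpair j)" for j l
  have add_then_remove: "fmul (ferm_thsq n) W (S \<union> tpair j) = W S + (\<Sum>l\<in>?full. G j l)"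
    if j: "j \<in> ?free" for j
  proof -
    have "{l\<in>{1..n}. tpair l \<subseteq> S \<union> tpair j} = insert j ?full" "j \<notin> ?full"
      using j tpair_disjoint[of j] tpair_nonempty[of j] by auto
    moreover have "W (S \<union> tpair j - tpair l) = G j l" if "l \<in> ?full" for l
    proof -
      have "S \<union> tpair j - tpair l = (S - tpair l) \<union> tpair j"
        using that j tpair_disjoint[of j l] by auto
      then show ?thesis by (simp add: G_def)
    qed
    moreover have "S \<union> tpair j - tpair j = S" using j by auto
    ultimately show ?thesis
      by (simp add: fmul_ferm_thsq[OF assms])
  qed
  have remove_then_add: "ferm_lap n W (S - tpair l) = -4 * (W S + (\<Sum>j\<in>?free. G j l))"
    if l: "l \<in> ?full" for l
  proof -
    have "{j\<in>{1..n}. tpair j \<inter> (S - tpair l) = {}} = insert l ?free" "l \<notin> ?free"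
      using l tpair_disjoint[of _ l] tpair_nonempty[of l] by auto
    moreover have "S - tpair l \<union> tpair l = S" using l by auto
    ultimately show ?thesis by (simp add: ferm_lap_def G_def)
  qed
  have L: "ferm_lap n (fmul (ferm_thsq n) W) S = -4 * (real (card ?free) * W S + (\<Sum>j\<in>?free. \<Sum>l\<in>?full. G j l))"
    by (simp add: ferm_lap_def add_then_remove sum.distrib)
  have "fmul (ferm_thsq n) (ferm_lap n W) S = (\<Sum>l\<in>?full. -4 * (W S + (\<Sum>j\<in>?free. G j l)))"
    by (simp add: fmul_ferm_thsq[OF ferm_finsupp_ferm_lap[OF assms]] remove_then_add)
  then have R: "fmul (ferm_thsq n) (ferm_lap n W) S = -4 * (real (card ?full) * W S + (\<Sum>l\<in>?full. \<Sum>j\<in>?free. G j l))"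
    by (simp add: sum_subtractf sum_negf sum_distrib_left)
  have "(\<Sum>l\<in>?full. \<Sum>j\<in>?free. G j l) = (\<Sum>j\<in>?free. \<Sum>l\<in>?full. G j l)"
    by (rule sum.swap)
  then show ?thesis
    unfolding L R by (simp add: algebra_simps)
qed

section \<open>Tensor products and the super Laplacian\<close>

definition tensor :: "((nat \<Rightarrow> nat) \<Rightarrow> real) \<Rightarrow> (nat set \<Rightarrow> real) \<Rightarrow> spoly" where
  "tensor A W = (\<lambda>\<alpha> S. A \<alpha> * W S)"

lemma smul_tensor: "smul (tensor A W) (tensor B Z) = tensor (bmul A B) (fmul W Z)"
  unfolding smul_def tensor_def bmul_def fmul_def dominated_def
  by (intro ext) (simp add: sum_product ac_simps sum.swap[of _ "Pow _"])

lemma xsq_tensor: "xsq m = tensor (bos_xsq m) ferm_one"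
  by (intro ext) (simp add: xsq_def tensor_def bos_xsq_def ferm_one_def)

lemma thsq_tensor: "thsq n = tensor bos_one (ferm_thsq n)"
  by (intro ext) (simp add: thsq_def tensor_def bos_one_def ferm_thsq_def tpair_def)

lemma sone_tensor: "sone = tensor bos_one ferm_one"
  by (intro ext) (simp add: sone_def tensor_def bos_one_def ferm_one_def)

fun bos_xpow :: "nat \<Rightarrow> nat \<Rightarrow> (nat \<Rightarrow> nat) \<Rightarrow> real" where
  "bos_xpow m 0 = bos_one"
| "bos_xpow m (Suc r) = bmul (bos_xsq m) (bos_xpow m r)"

fun ferm_thpow :: "nat \<Rightarrow> nat \<Rightarrow> nat set \<Rightarrow> real" where
  "ferm_thpow n 0 = ferm_one"
| "ferm_thpow n (Suc l) = fmul (ferm_thsq n) (ferm_thpow n l)"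

lemma bos_finsupp_bos_xpow: "bos_finsupp (bos_xpow m r)"
  by (cases r) (simp_all add: bos_finsupp_bos_one bos_finsupp_bmul)

lemma ferm_finsupp_ferm_thpow: "ferm_finsupp (ferm_thpow n l)"
  by (cases l) (simp_all add: ferm_finsupp_ferm_one ferm_finsupp_fmul)

lemma spow_xsq: "spow (xsq m) r = tensor (bos_xpow m r) ferm_one"
  by (induction r)
    (simp_all add: sone_tensor xsq_tensor smul_tensor fmul_ferm_one_left ferm_finsupp_ferm_one)

lemma spow_thsq: "spow (thsq n) l = tensor bos_one (ferm_thpow n l)"
  by (induction l)
    (simp_all add: sone_tensor thsq_tensor smul_tensor bmul_bos_one_left bos_finsupp_bos_one)

lemma fpoly_tensor:
  "fpoly m n a k = (\<lambda>\<alpha> S. \<Sum>i\<le>k. a i * tensor (bos_xpow m (k - i)) (ferm_thpow n i) \<alpha> S)"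
  by (simp add: fpoly_def spow_xsq spow_thsq smul_tensor bmul_bos_one_right bos_finsupp_bos_xpow
      fmul_ferm_one_left ferm_finsupp_ferm_thpow)

lemma smul_sum_left:
  "smul (\<lambda>\<alpha> S. \<Sum>i\<in>I. c i * F i \<alpha> S) G = (\<lambda>\<gamma> U. \<Sum>i\<in>I. c i * smul (F i) G \<gamma> U)"
  by (intro ext) (simp add: smul_def sum_distrib_left sum_distrib_right ac_simps sum.swap[of _ I])

definition bos_part :: "spoly \<Rightarrow> (nat \<Rightarrow> nat) \<Rightarrow> real" where
  "bos_part h = (\<lambda>\<alpha>. h \<alpha> {})"

definition ferm_part :: "spoly \<Rightarrow> nat set \<Rightarrow> real" where
  "ferm_part g = (\<lambda>S. g (\<lambda>_. 0) S)"

lemma Hb_tensor: "h \<in> Hb m n p \<Longrightarrow> h = tensor (bos_part h) ferm_one"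
  by (intro ext) (auto simp: Hb_def tensor_def bos_part_def ferm_one_def)

lemma Hf_tensor: "g \<in> Hf m n q \<Longrightarrow> g = tensor bos_one (ferm_part g)"
  by (intro ext) (auto simp: Hf_def tensor_def ferm_part_def bos_one_def)

lemma fpoly_mul_harmonics:
  assumes "h \<in> Hb m n p" "g \<in> Hf m n q"
  shows "smul (smul (fpoly m n a k) h) g = (\<lambda>\<alpha> S. \<Sum>i\<le>k. a i *
    tensor (bmul (bos_xpow m (k - i)) (bos_part h)) (fmul (ferm_thpow n i) (ferm_part g)) \<alpha> S)"
  apply (subst Hb_tensor[OF assms(1)], subst Hf_tensor[OF assms(2)])
  by (simp only: fpoly_tensor smul_sum_left smul_tensor)
    (simp add: fmul_ferm_one_right ferm_finsupp_ferm_thpow bmul_bos_one_right bos_finsupp_bmul)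

lemma lap_b_eq:
  "lap_b m F \<alpha> S = - (\<Sum>j=1..m. (real (\<alpha> j) + 1) * (real (\<alpha> j) + 2) * F (\<alpha>(j := \<alpha> j + 2)) S)"
  by (simp add: lap_b_def dx_def algebra_simps)

lemma dth_dth_tpair:
  assumes "1 \<le> j"
  shows "dth (2*j - 1) (dth (2*j) F) \<alpha> S = (if tpair j \<inter> S = {} then - F \<alpha> (S \<union> tpair j) else 0)"
proof (cases "tpair j \<inter> S = {}")
  case False
  then show ?thesis by (auto simp: dth_def tpair_def)
next
  case True
  then have notin: "2*j - 1 \<notin> S" "2*j \<notin> S" by (auto simp: tpair_def)
  have "{s \<in> insert (2*j - 1) S. s < 2*j} = insert (2*j - 1) {s\<in>S. s < 2*j - 1}"
    using assms notin(1) by (auto simp: less_Suc_eq)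
  then have "card {s \<in> insert (2*j - 1) S. s < 2*j} = Suc (card {s\<in>S. s < 2*j - 1})"
    by simp
  moreover have "insert (2*j) (insert (2*j - 1) S) = S \<union> tpair j"
    by (auto simp: tpair_def)
  ultimately show ?thesis
    using assms notin True by (simp add: dth_def)
qed

lemma lap_f_eq: "lap_f n F \<alpha> S = -4 * (\<Sum>j\<in>{j\<in>{1..n}. tpair j \<inter> S = {}}. F \<alpha> (S \<union> tpair j))"
proof -
  have "lap_f n F \<alpha> S = 4 * (\<Sum>j=1..n. if tpair j \<inter> S = {} then - F \<alpha> (S \<union> tpair j) else 0)"
    unfolding lap_f_def by (intro arg_cong[where f = "\<lambda>x. 4 * x"] sum.cong refl dth_dth_tpair) simp
  also have "\<dots> = 4 * (\<Sum>j\<in>{j\<in>{1..n}. tpair j \<inter> S = {}}. - F \<alpha> (S \<union> tpair j))"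
    by (simp only: sum.inter_filter[OF finite_atLeastAtMost])
  finally show ?thesis by (simp add: sum_negf)
qed

lemma super_lap_tensor:
  "super_lap m n (tensor B W) = (\<lambda>\<alpha> S. bos_lap m B \<alpha> * W S + B \<alpha> * ferm_lap n W S)"
  by (intro ext) (simp add: super_lap_def lap_b_eq lap_f_eq bos_lap_def ferm_lap_def tensor_def
      sum_distrib_left sum_distrib_right ac_simps)

lemma super_lap_sum:
  "super_lap m n (\<lambda>\<alpha> S. \<Sum>i\<in>I. c i * F i \<alpha> S) = (\<lambda>\<alpha> S. \<Sum>i\<in>I. c i * super_lap m n (F i) \<alpha> S)"
proof (intro ext)
  fix \<alpha> S
  have "lap_b m (\<lambda>\<alpha> S. \<Sum>i\<in>I. c i * F i \<alpha> S) \<alpha> S = (\<Sum>i\<in>I. c i * lap_b m (F i) \<alpha> S)"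
    unfolding lap_b_eq by (simp add: sum_distrib_left sum_distrib_right sum_negf ac_simps) (rule sum.swap)
  moreover have "lap_f n (\<lambda>\<alpha> S. \<Sum>i\<in>I. c i * F i \<alpha> S) \<alpha> S = (\<Sum>i\<in>I. c i * lap_f n (F i) \<alpha> S)"
    unfolding lap_f_eq by (simp add: sum_distrib_left sum_distrib_right ac_simps) (rule sum.swap)
  ultimately show "super_lap m n (\<lambda>\<alpha> S. \<Sum>i\<in>I. c i * F i \<alpha> S) \<alpha> S = (\<Sum>i\<in>I. c i * super_lap m n (F i) \<alpha> S)"
    by (simp add: super_lap_def sum.distrib distrib_left)
qed

section \<open>Powers of x^2 and theta^2 times harmonics\<close>

lemma sum_fun_upd_add:
  fixes f :: "'a \<Rightarrow> 'b::comm_monoid_add"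
  assumes "finite A" "i \<in> A"
  shows "sum (f(i := v)) A + f i = sum f A + v"
proof -
  have "sum (f(i := v)) (A - {i}) = sum f (A - {i})"
    by (rule sum.cong) auto
  then show ?thesis
    by (simp add: sum.remove[OF assms] ac_simps)
qed

definition lapb_factor :: "nat \<Rightarrow> nat \<Rightarrow> nat \<Rightarrow> real" where
  "lapb_factor m p r = 2 * real r * (real m + 2 * real p + 2 * real r - 2)"

definition lapf_factor :: "nat \<Rightarrow> nat \<Rightarrow> nat \<Rightarrow> real" where
  "lapf_factor n q l = -4 * real l * (real n - real q - real l + 1)"

locale bos_harmonic =
  fixes m p :: nat and h :: "(nat \<Rightarrow> nat) \<Rightarrow> real"
  assumes finsupp: "bos_finsupp h"
    and homogeneous: "\<And>\<alpha>. h \<alpha> \<noteq> 0 \<Longrightarrow> (\<Sum>i=1..m. \<alpha> i) = p"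
    and harmonic: "\<And>\<alpha>. bos_lap m h \<alpha> = 0"
begin

lemma xpow_mul_Suc: "bmul (bos_xpow m (Suc r)) h = bmul (bos_xsq m) (bmul (bos_xpow m r) h)"
  by (simp add: bmul_assoc)

lemma xpow_mul_homogeneous:
  "bmul (bos_xpow m r) h \<gamma> \<noteq> 0 \<Longrightarrow> (\<Sum>i=1..m. \<gamma> i) = p + 2 * r"
proof (induction r arbitrary: \<gamma>)
  case 0
  then show ?case using homogeneous by (simp add: bmul_bos_one_left[OF finsupp])
next
  case (Suc r)
  then have "(\<Sum>i=1..m. if 2 \<le> \<gamma> i then bmul (bos_xpow m r) h (\<gamma>(i := \<gamma> i - 2)) else 0) \<noteq> 0"
    unfolding xpow_mul_Suc by (simp add: bmul_bos_xsq[OF bos_finsupp_bmul])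
  then obtain i where "i \<in> {1..m}"
      and "(if 2 \<le> \<gamma> i then bmul (bos_xpow m r) h (\<gamma>(i := \<gamma> i - 2)) else 0) \<noteq> 0"
    by (rule sum.not_neutral_contains_not_neutral)
  then have i: "i \<in> {1..m}" "2 \<le> \<gamma> i" "bmul (bos_xpow m r) h (\<gamma>(i := \<gamma> i - 2)) \<noteq> 0"
    by (simp_all split: if_splits)
  then have "(\<Sum>l=1..m. (\<gamma>(i := \<gamma> i - 2)) l) = p + 2 * r" using Suc.IH by blast
  with i sum_fun_upd_add[of "{1..m}" i \<gamma> "\<gamma> i - 2"] show ?case
    by simp
qed

lemma bos_lap_xpow_mul:
  "bos_lap m (bmul (bos_xpow m r) h) = (\<lambda>\<gamma>. lapb_factor m p r * bmul (bos_xpow m (r - 1)) h \<gamma>)"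
proof (induction r)
  case 0
  then show ?case by (simp add: bmul_bos_one_left[OF finsupp] harmonic lapb_factor_def fun_eq_iff)
next
  case (Suc r)
  have degree: "(\<Sum>j=1..m. real (\<gamma> j)) = real p + 2 * real r" if "bmul (bos_xpow m r) h \<gamma> \<noteq> 0" for \<gamma>
    using xpow_mul_homogeneous[OF that] by (simp flip: of_nat_sum)
  have commute: "bmul (bos_xsq m) (bos_lap m (bmul (bos_xpow m r) h)) \<gamma>
      = lapb_factor m p r * bmul (bos_xpow m r) h \<gamma>" for \<gamma>
    unfolding Suc.IH bmul_mult_right by (cases r) (simp_all add: lapb_factor_def bmul_assoc)
  show ?case
  proof
    fix \<gamma>
    have "(4 * (\<Sum>j=1..m. real (\<gamma> j)) + 2 * real m) * bmul (bos_xpow m r) h \<gamma>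
        = (4 * (real p + 2 * real r) + 2 * real m) * bmul (bos_xpow m r) h \<gamma>"
      using degree by (cases "bmul (bos_xpow m r) h \<gamma> = 0") simp_all
    then show "bos_lap m (bmul (bos_xpow m (Suc r)) h) \<gamma>
        = lapb_factor m p (Suc r) * bmul (bos_xpow m (Suc r - 1)) h \<gamma>"
      unfolding xpow_mul_Suc bos_lap_bmul_bos_xsq[OF bos_finsupp_bmul] commute
      by (simp add: lapb_factor_def algebra_simps)
  qed
qed

lemma xpow_mul_nonzero:
  assumes "h \<noteq> (\<lambda>_. 0)" "0 < m"
  shows "bmul (bos_xpow m r) h \<noteq> (\<lambda>_. 0)"
proof (induction r)
  case 0
  then show ?case using assms(1) by (simp add: bmul_bos_one_left[OF finsupp])
next
  case (Suc r)
  have "lapb_factor m p (Suc r) \<noteq> 0" using assms(2) by (simp add: lapb_factor_def)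
  moreover have "bos_lap m (\<lambda>_. 0) = (\<lambda>_. 0)" by (simp add: bos_lap_def fun_eq_iff)
  ultimately have "bmul (bos_xpow m r) h = (\<lambda>_. 0)" if "bmul (bos_xpow m (Suc r)) h = (\<lambda>_. 0)"
    using bos_lap_xpow_mul[of "Suc r"] unfolding that by (simp add: fun_eq_iff)
  with Suc.IH show ?case by blast
qed

end

locale ferm_harmonic =
  fixes n q :: nat and g :: "nat set \<Rightarrow> real"
  assumes support: "\<And>S. g S \<noteq> 0 \<Longrightarrow> S \<subseteq> {1..2*n} \<and> card S = q"
    and harmonic: "\<And>S. ferm_lap n g S = 0"
begin

lemma finsupp: "ferm_finsupp g"
  unfolding ferm_finsupp_def using support finite_subset[of _ "{1..2*n}"] by blast

lemma thpow_mul_Suc: "fmul (ferm_thpow n (Suc l)) g = fmul (ferm_thsq n) (fmul (ferm_thpow n l) g)"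
  by (simp add: fmul_assoc)

lemma thpow_mul_support:
  "fmul (ferm_thpow n l) g S \<noteq> 0 \<Longrightarrow> S \<subseteq> {1..2*n} \<and> card S = q + 2 * l"
proof (induction l arbitrary: S)
  case 0
  then show ?case using support by (simp add: fmul_ferm_one_left[OF finsupp])
next
  case (Suc l)
  then have "(\<Sum>j\<in>{j\<in>{1..n}. tpair j \<subseteq> S}. fmul (ferm_thpow n l) g (S - tpair j)) \<noteq> 0"
    unfolding thpow_mul_Suc by (simp add: fmul_ferm_thsq[OF ferm_finsupp_fmul])
  then obtain j where j: "j \<in> {1..n}" "tpair j \<subseteq> S" "fmul (ferm_thpow n l) g (S - tpair j) \<noteq> 0"
    using sum.not_neutral_contains_not_neutral by blast
  then have rest: "S - tpair j \<subseteq> {1..2*n}" "card (S - tpair j) = q + 2 * l"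
    using Suc.IH by blast+
  moreover have "tpair j \<subseteq> {1..2*n}" using j(1) by (auto simp: tpair_def)
  moreover have "card S = card (S - tpair j) + card (tpair j)"
    using j(2) finite_subset[OF rest(1)] by (simp add: card_Diff_subset card_mono)
  ultimately show ?case using j(1,2) card_tpair[of j] by auto
qed

lemma ferm_lap_thpow_mul:
  "ferm_lap n (fmul (ferm_thpow n l) g) = (\<lambda>S. lapf_factor n q l * fmul (ferm_thpow n (l - 1)) g S)"
proof (induction l)
  case 0
  then show ?case by (simp add: fmul_ferm_one_left[OF finsupp] harmonic lapf_factor_def fun_eq_iff)
next
  case (Suc l)
  have pairs: "real (card {j\<in>{1..n}. tpair j \<inter> S = {}}) - real (card {j\<in>{1..n}. tpair j \<subseteq> S})
      = real n - real q - 2 * real l" if "fmul (ferm_thpow n l) g S \<noteq> 0" for S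
    using thpow_mul_support[OF that] card_free_minus_card_full_tpairs[of S n] by simp
  have commute: "fmul (ferm_thsq n) (ferm_lap n (fmul (ferm_thpow n l) g)) S
      = lapf_factor n q l * fmul (ferm_thpow n l) g S" for S
    unfolding Suc.IH fmul_mult_right by (cases l) (simp_all add: lapf_factor_def fmul_assoc)
  show ?case
  proof
    fix S
    have "4 * (real (card {j\<in>{1..n}. tpair j \<inter> S = {}}) - real (card {j\<in>{1..n}. tpair j \<subseteq> S}))
        * fmul (ferm_thpow n l) g S = 4 * (real n - real q - 2 * real l) * fmul (ferm_thpow n l) g S"
      using pairs by (cases "fmul (ferm_thpow n l) g S = 0") simp_all
    then show "ferm_lap n (fmul (ferm_thpow n (Suc l)) g) S
        = lapf_factor n q (Suc l) * fmul (ferm_thpow n (Suc l - 1)) g S"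
      unfolding thpow_mul_Suc ferm_lap_fmul_ferm_thsq[OF ferm_finsupp_fmul] commute
      by (simp add: lapf_factor_def algebra_simps)
  qed
qed

lemma thpow_mul_nonzero:
  assumes "g \<noteq> (\<lambda>_. 0)" "q + l \<le> n"
  shows "fmul (ferm_thpow n l) g \<noteq> (\<lambda>_. 0)"
  using assms(2)
proof (induction l)
  case 0
  then show ?case using assms(1) by (simp add: fmul_ferm_one_left[OF finsupp])
next
  case (Suc l)
  have "lapf_factor n q (Suc l) \<noteq> 0" using Suc.prems by (simp add: lapf_factor_def)
  moreover have "ferm_lap n (\<lambda>_. 0) = (\<lambda>_. 0)" by (simp add: ferm_lap_def fun_eq_iff)
  ultimately have "fmul (ferm_thpow n l) g = (\<lambda>_. 0)" if "fmul (ferm_thpow n (Suc l)) g = (\<lambda>_. 0)"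
    using ferm_lap_thpow_mul[of "Suc l"] unfolding that by (simp add: fun_eq_iff)
  with Suc show ?case by auto
qed

lemma thpow_mul_degree_unique:
  "fmul (ferm_thpow n i) g S \<noteq> 0 \<Longrightarrow> fmul (ferm_thpow n j) g S \<noteq> 0 \<Longrightarrow> i = j"
  using thpow_mul_support[of i S] thpow_mul_support[of j S] by simp

text \<open>The products theta^(2i) g have pairwise different degrees, so evaluating at a monomial
  of degree q + 2j isolates the term with index j.\<close>
lemma sum_thpow_mul_single:
  assumes "finite I" "j \<in> I" "fmul (ferm_thpow n j) g S \<noteq> 0"
  shows "(\<Sum>i\<in>I. c i * fmul (ferm_thpow n i) g S) = c j * fmul (ferm_thpow n j) g S"
proof -
  have "fmul (ferm_thpow n i) g S = 0" if "i \<noteq> j" for i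
    using thpow_mul_degree_unique[of i S j] assms(3) that by blast
  then have "(\<Sum>i\<in>I. c i * fmul (ferm_thpow n i) g S) = (\<Sum>i\<in>{j}. c i * fmul (ferm_thpow n i) g S)"
    using assms(1,2) by (intro sum.mono_neutral_right) auto
  then show ?thesis by simp
qed

end

section \<open>The coefficient recursion\<close>

lemma bos_harmonic_bos_part:
  assumes "h \<in> Hb m n p"
  shows "bos_harmonic m p (bos_part h)"
proof
  have ok: "sp_ok m n h" and hom: "\<And>\<alpha> S. h \<alpha> S \<noteq> 0 \<Longrightarrow> S = {} \<and> (\<Sum>i=1..m. \<alpha> i) = p"
    and lap: "lap_b m h = szero"
    using assms by (auto simp: Hb_def)
  show "bos_finsupp (bos_part h)"
    unfolding bos_finsupp_def
  proof (intro allI impI)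
    fix \<gamma> :: "nat \<Rightarrow> nat" assume inf: "infinite {i. \<gamma> i \<noteq> 0}"
    show "bos_part h \<gamma> = 0"
    proof (rule ccontr)
      assume "bos_part h \<gamma> \<noteq> 0"
      then have "\<forall>i. i \<notin> {1..m} \<longrightarrow> \<gamma> i = 0" using ok by (auto simp: sp_ok_def bos_part_def)
      then have "{i. \<gamma> i \<noteq> 0} \<subseteq> {1..m}" by auto
      then show False using inf finite_subset by blast
    qed
  qed
  show "(\<Sum>i=1..m. \<alpha> i) = p" if "bos_part h \<alpha> \<noteq> 0" for \<alpha>
    using hom that by (simp add: bos_part_def)
  show "bos_lap m (bos_part h) \<alpha> = 0" for \<alpha>
    using fun_cong[OF fun_cong[OF lap, of \<alpha>], of "{}"]
    by (simp add: lap_b_eq bos_lap_def bos_part_def szero_def)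
qed

lemma ferm_harmonic_ferm_part:
  assumes "g \<in> Hf m n q"
  shows "ferm_harmonic n q (ferm_part g)"
proof
  have ok: "sp_ok m n g" and sup: "\<And>\<alpha> S. g \<alpha> S \<noteq> 0 \<Longrightarrow> \<alpha> = (\<lambda>_. 0) \<and> card S = q"
    and lap: "lap_f n g = szero"
    using assms by (auto simp: Hf_def)
  show "S \<subseteq> {1..2*n} \<and> card S = q" if "ferm_part g S \<noteq> 0" for S
    using ok sup that by (auto simp: sp_ok_def ferm_part_def)
  show "ferm_lap n (ferm_part g) S = 0" for S
    using fun_cong[OF fun_cong[OF lap, of "\<lambda>_. 0"], of S]
    by (simp add: lap_f_eq ferm_lap_def ferm_part_def szero_def)
qed

definition coeff_residual :: "nat \<Rightarrow> nat \<Rightarrow> nat \<Rightarrow> nat \<Rightarrow> nat \<Rightarrow> (nat \<Rightarrow> real) \<Rightarrow> nat \<Rightarrow> real" where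
  "coeff_residual m n p q k a j = a j * lapb_factor m p (k - j) + a (Suc j) * lapf_factor n q (Suc j)"

lemma super_lap_fpoly_harmonics:
  assumes "h \<in> Hb m n p" "g \<in> Hf m n q"
  shows "super_lap m n (smul (smul (fpoly m n a k) h) g) = (\<lambda>\<alpha> S. \<Sum>j<k. coeff_residual m n p q k a j *
    (bmul (bos_xpow m (k - Suc j)) (bos_part h) \<alpha> * fmul (ferm_thpow n j) (ferm_part g) S))"
proof (intro ext)
  fix \<alpha> S
  interpret H: bos_harmonic m p "bos_part h" using bos_harmonic_bos_part[OF assms(1)] .
  interpret G: ferm_harmonic n q "ferm_part g" using ferm_harmonic_ferm_part[OF assms(2)] .
  define Y where "Y r = bmul (bos_xpow m r) (bos_part h) \<alpha>" for r
  define Z where "Z l = fmul (ferm_thpow n l) (ferm_part g) S" for l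
  have "super_lap m n (smul (smul (fpoly m n a k) h) g) \<alpha> S
      = (\<Sum>i\<le>k. a i * lapb_factor m p (k - i) * (Y (k - Suc i) * Z i))
        + (\<Sum>i\<le>k. a i * lapf_factor n q i * (Y (k - i) * Z (i - 1)))"
    by (simp add: fpoly_mul_harmonics[OF assms] super_lap_sum super_lap_tensor H.bos_lap_xpow_mul
        G.ferm_lap_thpow_mul Y_def Z_def sum.distrib algebra_simps)
  also have "(\<Sum>i\<le>k. a i * lapb_factor m p (k - i) * (Y (k - Suc i) * Z i))
      = (\<Sum>j<k. a j * lapb_factor m p (k - j) * (Y (k - Suc j) * Z j))"
    by (simp add: lessThan_Suc_atMost[symmetric] lapb_factor_def)
  also have "(\<Sum>i\<le>k. a i * lapf_factor n q i * (Y (k - i) * Z (i - 1)))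
      = (\<Sum>j<k. a (Suc j) * lapf_factor n q (Suc j) * (Y (k - Suc j) * Z j))"
    by (cases k) (simp_all only: sum.atMost_Suc_shift lessThan_Suc_atMost, simp_all add: lapf_factor_def)
  finally show "super_lap m n (smul (smul (fpoly m n a k) h) g) \<alpha> S = (\<Sum>j<k. coeff_residual m n p q k a j *
      (bmul (bos_xpow m (k - Suc j)) (bos_part h) \<alpha> * fmul (ferm_thpow n j) (ferm_part g) S))"
    by (simp add: coeff_residual_def Y_def Z_def sum.distrib[symmetric] algebra_simps)
qed

lemma fpoly_mul_harmonics_at:
  assumes "h \<in> Hb m n p" "g \<in> Hf m n q"
  shows "smul (smul (fpoly m n a k) h) g \<alpha> S = (\<Sum>i\<le>k. a i *
    (bmul (bos_xpow m (k - i)) (bos_part h) \<alpha> * fmul (ferm_thpow n i) (ferm_part g) S))"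
  by (simp add: fpoly_mul_harmonics[OF assms] tensor_def)

lemma coeff_residual_eq_zero_if_annihilated:
  assumes h: "h \<in> Hb m n p" "bos_part h \<noteq> (\<lambda>_. 0)" and g: "g \<in> Hf m n q" "ferm_part g \<noteq> (\<lambda>_. 0)"
    and "0 < m" "q + k \<le> n"
    and annihilated: "super_lap m n (smul (smul (fpoly m n a k) h) g) = szero" and "j < k"
  shows "coeff_residual m n p q k a j = 0"
proof -
  interpret H: bos_harmonic m p "bos_part h" using bos_harmonic_bos_part[OF h(1)] .
  interpret G: ferm_harmonic n q "ferm_part g" using ferm_harmonic_ferm_part[OF g(1)] .
  obtain \<gamma> where \<gamma>: "bmul (bos_xpow m (k - Suc j)) (bos_part h) \<gamma> \<noteq> 0"
    using H.xpow_mul_nonzero[OF h(2) \<open>0 < m\<close>] by (auto simp: fun_eq_iff)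
  obtain S where S: "fmul (ferm_thpow n j) (ferm_part g) S \<noteq> 0"
    using G.thpow_mul_nonzero[OF g(2), of j] assms(6,8) by (auto simp: fun_eq_iff)
  have "0 = (\<Sum>i<k. coeff_residual m n p q k a i * bmul (bos_xpow m (k - Suc i)) (bos_part h) \<gamma>
      * fmul (ferm_thpow n i) (ferm_part g) S)"
    using fun_cong[OF fun_cong[OF annihilated, of \<gamma>], of S]
    by (simp add: super_lap_fpoly_harmonics[OF h(1) g(1)] szero_def mult.assoc)
  also have "\<dots> = coeff_residual m n p q k a j * bmul (bos_xpow m (k - Suc j)) (bos_part h) \<gamma>
      * fmul (ferm_thpow n j) (ferm_part g) S"
    using G.sum_thpow_mul_single[OF _ _ S] \<open>j < k\<close> by simp
  finally show ?thesis using \<gamma> S by simp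
qed

lemma super_lap_fspan_eq_szero:
  assumes "\<forall>j<k. coeff_residual m n p q k a j = 0" "F \<in> fspan m n (fpoly m n a k) p q"
  shows "super_lap m n F = szero"
proof -
  obtain N :: nat and h g where hg: "\<forall>i<N. h i \<in> Hb m n p \<and> g i \<in> Hf m n q"
    and "F = (\<lambda>\<alpha> S. \<Sum>i<N. smul (smul (fpoly m n a k) (h i)) (g i) \<alpha> S)"
    using assms(2) unfolding fspan_def by blast
  then have F: "F = (\<lambda>\<alpha> S. \<Sum>i<N. 1 * smul (smul (fpoly m n a k) (h i)) (g i) \<alpha> S)"
    by simp
  have "super_lap m n (smul (smul (fpoly m n a k) (h i)) (g i)) = szero" if "i < N" for i
    using hg that assms(1) by (simp add: super_lap_fpoly_harmonics[of "h i" m n p "g i" q] szero_def)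
  then show ?thesis
    unfolding F super_lap_sum by (simp add: szero_def)
qed

lemma smul_harmonics_in_fspan:
  "h \<in> Hb m n p \<Longrightarrow> g \<in> Hf m n q \<Longrightarrow> smul (smul f h) g \<in> fspan m n f p q"
  unfolding fspan_def by (intro CollectI exI[of _ 1] exI[of _ "\<lambda>_. h"] exI[of _ "\<lambda>_. g"]) simp

lemma fspan_fpoly_ne_szero:
  assumes h: "h \<in> Hb m n p" "bos_part h \<noteq> (\<lambda>_. 0)" and g: "g \<in> Hf m n q" "ferm_part g \<noteq> (\<lambda>_. 0)"
    and "0 < m" "q \<le> n" "a 0 \<noteq> 0"
  shows "fspan m n (fpoly m n a k) p q \<noteq> {szero}"
proof -
  interpret H: bos_harmonic m p "bos_part h" using bos_harmonic_bos_part[OF h(1)] .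
  interpret G: ferm_harmonic n q "ferm_part g" using ferm_harmonic_ferm_part[OF g(1)] .
  obtain \<gamma> where \<gamma>: "bmul (bos_xpow m k) (bos_part h) \<gamma> \<noteq> 0"
    using H.xpow_mul_nonzero[OF h(2) \<open>0 < m\<close>] by (auto simp: fun_eq_iff)
  obtain S where S: "fmul (ferm_thpow n 0) (ferm_part g) S \<noteq> 0"
    using G.thpow_mul_nonzero[OF g(2), of 0] \<open>q \<le> n\<close> by (auto simp: fun_eq_iff)
  have "smul (smul (fpoly m n a k) h) g \<gamma> S
      = a 0 * bmul (bos_xpow m k) (bos_part h) \<gamma> * fmul (ferm_thpow n 0) (ferm_part g) S"
    using G.sum_thpow_mul_single[OF _ _ S, of "{..k}" "\<lambda>i. a i * bmul (bos_xpow m (k - i)) (bos_part h) \<gamma>"]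
    by (simp add: fpoly_mul_harmonics_at[OF h(1) g(1)] mult.assoc)
  then have "smul (smul (fpoly m n a k) h) g \<noteq> szero"
    using \<gamma> S \<open>a 0 \<noteq> 0\<close> by (auto simp: szero_def dest: fun_cong)
  then show ?thesis
    using smul_harmonics_in_fspan[OF h(1) g(1)] by blast
qed

fun fcoeff :: "nat \<Rightarrow> nat \<Rightarrow> nat \<Rightarrow> nat \<Rightarrow> nat \<Rightarrow> real \<Rightarrow> nat \<Rightarrow> real" where
  "fcoeff m n p q k c 0 = c"
| "fcoeff m n p q k c (Suc j) = (if j < k
     then fcoeff m n p q k c j * lapb_factor m p (k - j) / (4 * real (Suc j) * (real n - real q - real j))
     else 0)"

lemma fcoeff_eq_0: "k < i \<Longrightarrow> fcoeff m n p q k c i = 0"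
  by (cases i) auto

lemma lapf_factor_Suc_eq: "lapf_factor n q (Suc j) = - (4 * real (Suc j) * (real n - real q - real j))"
  by (simp add: lapf_factor_def algebra_simps)

lemma coeff_residual_fcoeff:
  assumes "q + k \<le> n" "j < k"
  shows "coeff_residual m n p q k (fcoeff m n p q k c) j = 0"
proof -
  have "4 * real (Suc j) * (real n - real q - real j) \<noteq> 0" using assms by simp
  then show ?thesis using assms(2) by (simp add: coeff_residual_def lapf_factor_Suc_eq)
qed

lemma eq_fcoeff_if_coeff_residual:
  assumes "\<forall>i>k. b i = 0" "\<forall>j<k. coeff_residual m n p q k b j = 0" "q + k \<le> n"
  shows "b = fcoeff m n p q k (b 0)"
proof
  fix i
  show "b i = fcoeff m n p q k (b 0) i"
  proof (induction i)
    case (Suc j)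
    show ?case
    proof (cases "j < k")
      case True
      have "4 * real (Suc j) * (real n - real q - real j) \<noteq> 0" using True assms(3) by simp
      moreover have "coeff_residual m n p q k b j = 0" using True assms(2) by simp
      ultimately have "b (Suc j) = b j * lapb_factor m p (k - j) / (4 * real (Suc j) * (real n - real q - real j))"
        by (simp add: coeff_residual_def lapf_factor_Suc_eq field_simps)
      with True Suc.IH show ?thesis by simp
    qed (use assms(1) in simp)
  qed simp
qed

lemma Hb_nonzero_bos_part:
  assumes "Hb m n p \<noteq> {szero}"
  obtains h where "h \<in> Hb m n p" "bos_part h \<noteq> (\<lambda>_. 0)"
proof -
  have "szero \<in> Hb m n p"
    by (simp add: Hb_def sp_ok_def szero_def lap_b_def dx_def)
  then obtain h where "h \<in> Hb m n p" "h \<noteq> szero" using assms by blast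
  moreover from \<open>h \<in> Hb m n p\<close> have "h = tensor (bos_part h) ferm_one" by (rule Hb_tensor)
  ultimately show ?thesis
    using that by (auto simp: tensor_def szero_def fun_eq_iff)
qed

definition odd_indices :: "nat \<Rightarrow> nat set" where
  "odd_indices q = (\<lambda>i. 2*i - 1) ` {1..q}"

text \<open>The monomial theta_1 theta_3 ... theta_{2q-1} contains no pair theta_{2j-1} theta_{2j}, so
  the fermionic Laplacian annihilates it.\<close>
definition odd_monomial :: "nat \<Rightarrow> spoly" where
  "odd_monomial q = (\<lambda>\<alpha> S. if \<alpha> = (\<lambda>_. 0) \<and> S = odd_indices q then 1 else 0)"

lemma card_odd_indices: "card (odd_indices q) = q"
proof -
  have "inj_on (\<lambda>i. 2*i - 1) {1..q}" by (rule inj_onI) auto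
  then show ?thesis by (simp add: odd_indices_def card_image)
qed

lemma odd_monomial_Hf:
  assumes "q \<le> n"
  shows "odd_monomial q \<in> Hf m n q"
proof -
  have "odd_indices q \<subseteq> {1..2*n}" using assms by (auto simp: odd_indices_def)
  moreover have "{(\<alpha>, S). odd_monomial q \<alpha> S \<noteq> 0} = {((\<lambda>_. 0), odd_indices q)}"
    by (auto simp: odd_monomial_def)
  ultimately have "sp_ok m n (odd_monomial q)"
    unfolding sp_ok_def by (auto simp: odd_monomial_def)
  moreover have "2*j \<notin> odd_indices q" for j
    by (auto simp: odd_indices_def) presburger
  then have "odd_monomial q \<alpha> (S \<union> tpair j) = 0" for \<alpha> S j
    by (auto simp: odd_monomial_def tpair_def)
  then have "lap_f n (odd_monomial q) = szero"
    by (simp add: lap_f_eq szero_def fun_eq_iff)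
  ultimately show ?thesis
    by (auto simp: Hf_def odd_monomial_def card_odd_indices)
qed

lemma ferm_part_odd_monomial: "ferm_part (odd_monomial q) \<noteq> (\<lambda>_. 0)"
  by (auto simp: ferm_part_def odd_monomial_def fun_eq_iff)

theorem mainTheorem4:
  fixes m n p q k :: nat
  assumes "0 < m" and "Hb m n p \<noteq> {szero}"
    and "q < n" and "k < n - q + 1"
  shows "\<exists>!a :: nat \<Rightarrow> real. (\<forall>i>k. a i = 0)
     \<and> fspan m n (fpoly m n a k) p q \<noteq> {szero}
     \<and> (\<forall>F\<in>fspan m n (fpoly m n a k) p q. super_lap m n F = szero)
     \<and> a 0 = fact (n - q) / Gamma (real m / 2 + real p + real k)"
proof -
  obtain h where h: "h \<in> Hb m n p" "bos_part h \<noteq> (\<lambda>_. 0)"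
    using Hb_nonzero_bos_part[OF assms(2)] .
  have g: "odd_monomial q \<in> Hf m n q" "ferm_part (odd_monomial q) \<noteq> (\<lambda>_. 0)"
    using assms(3) by (simp_all add: odd_monomial_Hf ferm_part_odd_monomial)
  have qk: "q + k \<le> n" using assms(3,4) by linarith
  define c where "c = fact (n - q) / Gamma (real m / 2 + real p + real k)"
  have "0 < real m / 2 + real p + real k" using assms(1) by simp
  from Gamma_real_pos[OF this] have "c \<noteq> 0" by (simp add: c_def)
  show ?thesis
    unfolding c_def[symmetric]
  proof (rule ex1I[of _ "fcoeff m n p q k c"], intro conjI)
    show "fspan m n (fpoly m n (fcoeff m n p q k c) k) p q \<noteq> {szero}"
      using fspan_fpoly_ne_szero[OF h g assms(1)] assms(3) \<open>c \<noteq> 0\<close> by simp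
    show "\<forall>F\<in>fspan m n (fpoly m n (fcoeff m n p q k c) k) p q. super_lap m n F = szero"
      using super_lap_fspan_eq_szero coeff_residual_fcoeff[OF qk] by blast
  next
    fix b
    assume "(\<forall>i>k. b i = 0) \<and> fspan m n (fpoly m n b k) p q \<noteq> {szero}
      \<and> (\<forall>F\<in>fspan m n (fpoly m n b k) p q. super_lap m n F = szero) \<and> b 0 = c"
    then show "b = fcoeff m n p q k c"
      using eq_fcoeff_if_coeff_residual[OF _ _ qk] smul_harmonics_in_fspan[OF h(1) g(1)]
        coeff_residual_eq_zero_if_annihilated[OF h g assms(1) qk] by metis
  qed (simp_all add: fcoeff_eq_0)
qed

end
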